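(* Let $L$ be a geometric lattice of rank $r+1$ with $n$ atoms. Then for all $S\subseteq[r]$, $f_S(L)\le f_S(\mathscr{B}_{r+1,n})$.
   Context: A geometric lattice is a finite graded atomic lattice whose rank function $\rho$ satisfies $\rho(x\vee y)+\rho(x\wedge y)\le \rho(x)+\rho(y)$. For a graded poset $P$ of rank $r+1$ with $\hat 0,\hat 1$ and $S\subseteq[r]=\{1,\dots,r\}$, $f_S(P)$ is the number of chains in $P$ whose elements have ranks exactly the elements of $S$. The truncated Boolean algebra $\mathscr{B}_{r+1,n}$ ($n\ge r+1$) is the poset of all subsets of $[n]$ of cardinality at most $r$, ordered by inclusion, together with an added maximum element $\hat 1$. *)

theory Defs
  imports Main
begin

definition lt_on :: "('a \<Rightarrow> 'a \<Rightarrow> bool) \<Rightarrow> 'a \<Rightarrow> 'a \<Rightarrow> bool" where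
  "lt_on le x y \<longleftrightarrow> le x y \<and> x \<noteq> y"

definition partial_order_on_set :: "'a set \<Rightarrow> ('a \<Rightarrow> 'a \<Rightarrow> bool) \<Rightarrow> bool" where
  "partial_order_on_set P le \<longleftrightarrow>
     (\<forall>x\<in>P. le x x) \<and>
     (\<forall>x\<in>P. \<forall>y\<in>P. le x y \<and> le y x \<longrightarrow> x = y) \<and>
     (\<forall>x\<in>P. \<forall>y\<in>P. \<forall>z\<in>P. le x y \<and> le y z \<longrightarrow> le x z)"

definition is_lub :: "'a set \<Rightarrow> ('a \<Rightarrow> 'a \<Rightarrow> bool) \<Rightarrow> 'a set \<Rightarrow> 'a \<Rightarrow> bool" where
  "is_lub P le A z \<longleftrightarrow> z \<in> P \<and> (\<forall>a\<in>A. le a z) \<and> (\<forall>w\<in>P. (\<forall>a\<in>A. le a w) \<longrightarrow> le z w)"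

definition is_glb :: "'a set \<Rightarrow> ('a \<Rightarrow> 'a \<Rightarrow> bool) \<Rightarrow> 'a set \<Rightarrow> 'a \<Rightarrow> bool" where
  "is_glb P le A z \<longleftrightarrow> z \<in> P \<and> (\<forall>a\<in>A. le z a) \<and> (\<forall>w\<in>P. (\<forall>a\<in>A. le w a) \<longrightarrow> le w z)"

definition join_on :: "'a set \<Rightarrow> ('a \<Rightarrow> 'a \<Rightarrow> bool) \<Rightarrow> 'a \<Rightarrow> 'a \<Rightarrow> 'a" where
  "join_on P le x y = (THE z. is_lub P le {x, y} z)"

definition meet_on :: "'a set \<Rightarrow> ('a \<Rightarrow> 'a \<Rightarrow> bool) \<Rightarrow> 'a \<Rightarrow> 'a \<Rightarrow> 'a" where
  "meet_on P le x y = (THE z. is_glb P le {x, y} z)"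

definition finite_lattice_on :: "'a set \<Rightarrow> ('a \<Rightarrow> 'a \<Rightarrow> bool) \<Rightarrow> bool" where
  "finite_lattice_on P le \<longleftrightarrow> finite P \<and> P \<noteq> {} \<and> partial_order_on_set P le \<and>
     (\<forall>x\<in>P. \<forall>y\<in>P. (\<exists>z. is_lub P le {x, y} z) \<and> (\<exists>z. is_glb P le {x, y} z))"

definition is_bot :: "'a set \<Rightarrow> ('a \<Rightarrow> 'a \<Rightarrow> bool) \<Rightarrow> 'a \<Rightarrow> bool" where
  "is_bot P le b \<longleftrightarrow> b \<in> P \<and> (\<forall>x\<in>P. le b x)"

definition is_top :: "'a set \<Rightarrow> ('a \<Rightarrow> 'a \<Rightarrow> bool) \<Rightarrow> 'a \<Rightarrow> bool" where
  "is_top P le t \<longleftrightarrow> t \<in> P \<and> (\<forall>x\<in>P. le x t)"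

definition covers :: "'a set \<Rightarrow> ('a \<Rightarrow> 'a \<Rightarrow> bool) \<Rightarrow> 'a \<Rightarrow> 'a \<Rightarrow> bool" where
  "covers P le x y \<longleftrightarrow> x \<in> P \<and> y \<in> P \<and> lt_on le x y \<and>
     \<not> (\<exists>z\<in>P. lt_on le x z \<and> lt_on le z y)"

definition atoms_of :: "'a set \<Rightarrow> ('a \<Rightarrow> 'a \<Rightarrow> bool) \<Rightarrow> 'a set" where
  "atoms_of P le = {a \<in> P. \<exists>b. is_bot P le b \<and> covers P le b a}"

definition graded_rank :: "'a set \<Rightarrow> ('a \<Rightarrow> 'a \<Rightarrow> bool) \<Rightarrow> ('a \<Rightarrow> nat) \<Rightarrow> bool" where
  "graded_rank P le \<rho> \<longleftrightarrow>
     (\<exists>b. is_bot P le b \<and> \<rho> b = 0) \<and>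
     (\<forall>x\<in>P. \<forall>y\<in>P. covers P le x y \<longrightarrow> \<rho> y = \<rho> x + 1)"

definition atomic_on :: "'a set \<Rightarrow> ('a \<Rightarrow> 'a \<Rightarrow> bool) \<Rightarrow> bool" where
  "atomic_on P le \<longleftrightarrow> (\<forall>x\<in>P. is_lub P le {a \<in> atoms_of P le. le a x} x)"

definition geometric_lattice :: "'a set \<Rightarrow> ('a \<Rightarrow> 'a \<Rightarrow> bool) \<Rightarrow> ('a \<Rightarrow> nat) \<Rightarrow> bool" where
  "geometric_lattice P le \<rho> \<longleftrightarrow> finite_lattice_on P le \<and> graded_rank P le \<rho> \<and> atomic_on P le \<and>
     (\<forall>x\<in>P. \<forall>y\<in>P. \<rho> (join_on P le x y) + \<rho> (meet_on P le x y) \<le> \<rho> x + \<rho> y)"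

definition chain_on :: "('a \<Rightarrow> 'a \<Rightarrow> bool) \<Rightarrow> 'a set \<Rightarrow> bool" where
  "chain_on le C \<longleftrightarrow> (\<forall>x\<in>C. \<forall>y\<in>C. le x y \<or> le y x)"

definition flag_f :: "'a set \<Rightarrow> ('a \<Rightarrow> 'a \<Rightarrow> bool) \<Rightarrow> ('a \<Rightarrow> nat) \<Rightarrow> nat set \<Rightarrow> nat" where
  "flag_f P le \<rho> S = card {C. C \<subseteq> P \<and> chain_on le C \<and> \<rho> ` C = S}"

text \<open>Truncated Boolean algebra B_{r+1,n}: subsets of [n] of size at most r
  (encoded as Some A), plus a top element (encoded as None).\<close>
definition trunc_bool_carrier :: "nat \<Rightarrow> nat \<Rightarrow> nat set option set" where
  "trunc_bool_carrier r n = insert None (Some ` {A. A \<subseteq> {1..n} \<and> card A \<le> r})"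

fun trunc_bool_le :: "nat set option \<Rightarrow> nat set option \<Rightarrow> bool" where
  "trunc_bool_le _ None = True"
| "trunc_bool_le None (Some _) = False"
| "trunc_bool_le (Some A) (Some B) = (A \<subseteq> B)"

fun trunc_bool_rank :: "nat \<Rightarrow> nat set option \<Rightarrow> nat" where
  "trunc_bool_rank r None = r + 1"
| "trunc_bool_rank r (Some A) = card A"

end

theory Submission
  imports Defs
begin

text \<open>Every element x of a geometric lattice is the join of a set of \<open>\<rho> x\<close> atoms, and along a
  chain these atom bases can be chosen nested: if a is an atom below y but not below x, then x meets
  a in the bottom element, so by submodularity the join of x and a has rank \<open>\<rho> x + 1\<close>, and
  adjoining a to a basis of x gives a basis of that join.
  Numbering the n atoms by 1, ..., n turns a chain of L with rank set S into a chain of subsets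
  of [n] with the same cardinalities, i.e. a chain of the truncated Boolean algebra with rank set S,
  and the original chain is recovered by taking joins. So the chains of L with rank set S inject
  into those of the truncated Boolean algebra.\<close>

lemma chain_on_image:
  assumes "chain_on le C" "\<And>x y. x \<in> C \<Longrightarrow> y \<in> C \<Longrightarrow> le x y \<Longrightarrow> le' (f x) (f y)"
  shows "chain_on le' (f ` C)"
  using assms unfolding chain_on_def by blast

lemma finite_trunc_bool_carrier: "finite (trunc_bool_carrier r n)"
proof -
  have "{A. A \<subseteq> {1..n} \<and> card A \<le> r} \<subseteq> Pow {1..n}"
    by blast
  then show ?thesis
    unfolding trunc_bool_carrier_def by (simp add: finite_subset)
qed

locale poset_on =
  fixes P :: "'a set" and le :: "'a \<Rightarrow> 'a \<Rightarrow> bool"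
  assumes partial_order: "partial_order_on_set P le"
begin

lemma po_refl: "x \<in> P \<Longrightarrow> le x x"
  using partial_order unfolding partial_order_on_set_def by blast

lemma po_antisym: "x \<in> P \<Longrightarrow> y \<in> P \<Longrightarrow> le x y \<Longrightarrow> le y x \<Longrightarrow> x = y"
  using partial_order unfolding partial_order_on_set_def by blast

lemma po_trans: "x \<in> P \<Longrightarrow> y \<in> P \<Longrightarrow> z \<in> P \<Longrightarrow> le x y \<Longrightarrow> le y z \<Longrightarrow> le x z"
  using partial_order unfolding partial_order_on_set_def by blast

lemma is_lub_unique: "is_lub P le A z \<Longrightarrow> is_lub P le A z' \<Longrightarrow> z = z'"
  unfolding is_lub_def using po_antisym by blast

lemma is_glb_unique: "is_glb P le A z \<Longrightarrow> is_glb P le A z' \<Longrightarrow> z = z'"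
  unfolding is_glb_def using po_antisym by blast

lemma is_bot_unique: "is_bot P le b \<Longrightarrow> is_bot P le b' \<Longrightarrow> b = b'"
  unfolding is_bot_def using po_antisym by blast

lemma join_on_eq: "is_lub P le {x, y} z \<Longrightarrow> join_on P le x y = z"
  unfolding join_on_def using is_lub_unique by blast

lemma meet_on_eq: "is_glb P le {x, y} z \<Longrightarrow> meet_on P le x y = z"
  unfolding meet_on_def using is_glb_unique by blast

lemma is_lub_empty: "is_bot P le b \<Longrightarrow> is_lub P le {} b"
  unfolding is_bot_def is_lub_def by blast

lemma is_lub_insert:
  assumes "A \<subseteq> P" "is_lub P le A x" "is_lub P le {x, a} z"
  shows "is_lub P le (insert a A) z"
proof -
  have "x \<in> P" "z \<in> P" "le x z" "\<forall>w\<in>A. le w x"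
    using assms(2,3) unfolding is_lub_def by auto
  then have "\<forall>w\<in>A. le w z"
    using assms(1) po_trans[of _ x z] by blast
  then show ?thesis
    using assms(2,3) unfolding is_lub_def by auto
qed

lemma atoms_subset: "atoms_of P le \<subseteq> P"
  unfolding atoms_of_def by blast

lemma glb_atom_not_below_is_bot:
  assumes "a \<in> atoms_of P le" "\<not> le a x" "is_glb P le {x, a} m"
  shows "is_bot P le m"
proof -
  obtain b where b: "is_bot P le b" "covers P le b a"
    using assms(1) unfolding atoms_of_def by blast
  have "m \<in> P" "le m a" "le m x"
    using assms(3) unfolding is_glb_def by auto
  moreover have "le b m"
    using b(1) \<open>m \<in> P\<close> unfolding is_bot_def by blast
  ultimately have "m = b"
    using b(2) assms(2) unfolding covers_def lt_on_def by blast
  with b(1) show ?thesis by simp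
qed

lemma chain_has_min:
  assumes "finite C" "C \<noteq> {}" "C \<subseteq> P" "chain_on le C"
  shows "\<exists>m\<in>C. \<forall>x\<in>C. le m x"
  using assms
proof (induction C rule: finite_ne_induct)
  case (singleton a)
  then show ?case by (auto intro: po_refl)
next
  case (insert a C)
  then obtain m where m: "m \<in> C" "\<forall>x\<in>C. le m x"
    unfolding chain_on_def by blast
  have "le a m \<or> le m a"
    using insert.prems m(1) unfolding chain_on_def by blast
  then show ?case
  proof
    assume "le a m"
    then have "\<forall>x\<in>insert a C. le a x"
      using insert.prems m po_trans[of a m] by (auto intro: po_refl)
    then show ?thesis by blast
  qed (use m in auto)
qed

end

locale finite_graded_poset = poset_on +
  fixes \<rho> :: "'a \<Rightarrow> nat"
  assumes finite_carrier: "finite P" and graded: "graded_rank P le \<rho>"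
begin

lemma rank_cover: "covers P le x y \<Longrightarrow> \<rho> y = \<rho> x + 1"
  using graded unfolding graded_rank_def covers_def by blast

lemma rank_bot: "is_bot P le b \<Longrightarrow> \<rho> b = 0"
  using graded is_bot_unique unfolding graded_rank_def by blast

lemma rank_atom: "a \<in> atoms_of P le \<Longrightarrow> \<rho> a = 1"
  unfolding atoms_of_def using rank_bot rank_cover by fastforce

lemma rank_less:
  assumes "x \<in> P" "z \<in> P" "lt_on le x z"
  shows "\<rho> x < \<rho> z"
  using assms
proof (induction "card {v \<in> P. lt_on le x v \<and> le v z}" arbitrary: x z rule: less_induct)
  case less
  show ?case
  proof (cases "covers P le x z")
    case True
    then show ?thesis by (simp add: rank_cover)
  next
    case False
    then obtain u where u: "u \<in> P" "lt_on le x u" "lt_on le u z"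
      using less.prems unfolding covers_def by blast
    let ?I = "\<lambda>x z. {v \<in> P. lt_on le x v \<and> le v z}"
    have fin: "finite (?I x z)"
      using finite_carrier by simp
    have "?I x u \<subseteq> ?I x z"
      using u(1,3) less.prems(2) po_trans[of _ u z] unfolding lt_on_def by blast
    moreover have "z \<in> ?I x z - ?I x u"
      using u less.prems po_antisym[of u z] po_refl[of z] unfolding lt_on_def by blast
    ultimately have "?I x u \<subset> ?I x z"
      by blast
    then have "\<rho> x < \<rho> u"
      using less.hyps psubset_card_mono[OF fin] less.prems(1) u by blast
    have "?I u z \<subseteq> ?I x z"
      using u(1,2) less.prems(1) po_trans[of x u] po_antisym[of x u] unfolding lt_on_def by blast
    moreover have "u \<in> ?I x z - ?I u z"
      using u unfolding lt_on_def by blast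
    ultimately have "?I u z \<subset> ?I x z"
      by blast
    then have "\<rho> u < \<rho> z"
      using less.hyps psubset_card_mono[OF fin] less.prems(2) u by blast
    with \<open>\<rho> x < \<rho> u\<close> show ?thesis by simp
  qed
qed

lemma rank_mono: "x \<in> P \<Longrightarrow> z \<in> P \<Longrightarrow> le x z \<Longrightarrow> \<rho> x \<le> \<rho> z"
  using rank_less[of x z] by (cases "x = z") (auto simp: lt_on_def)

end

locale geom_lattice =
  fixes L :: "'a set" and le :: "'a \<Rightarrow> 'a \<Rightarrow> bool" and \<rho> :: "'a \<Rightarrow> nat"
  assumes geometric: "geometric_lattice L le \<rho>"

sublocale geom_lattice \<subseteq> finite_graded_poset L le \<rho>
  using geometric
  by unfold_locales (auto simp: geometric_lattice_def finite_lattice_on_def)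

context geom_lattice
begin

lemma is_lub_join_on: "x \<in> L \<Longrightarrow> y \<in> L \<Longrightarrow> is_lub L le {x, y} (join_on L le x y)"
  using geometric join_on_eq unfolding geometric_lattice_def finite_lattice_on_def by metis

lemma is_glb_meet_on: "x \<in> L \<Longrightarrow> y \<in> L \<Longrightarrow> is_glb L le {x, y} (meet_on L le x y)"
  using geometric meet_on_eq unfolding geometric_lattice_def finite_lattice_on_def by metis

lemma rank_submodular:
  "x \<in> L \<Longrightarrow> y \<in> L \<Longrightarrow> \<rho> (join_on L le x y) + \<rho> (meet_on L le x y) \<le> \<rho> x + \<rho> y"
  using geometric unfolding geometric_lattice_def by blast

lemma is_lub_atoms_below: "x \<in> L \<Longrightarrow> is_lub L le {a \<in> atoms_of L le. le a x} x"
  using geometric unfolding geometric_lattice_def atomic_on_def by blast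

lemma finite_atoms: "finite (atoms_of L le)"
  using finite_carrier atoms_subset by (rule finite_subset[rotated])

lemma exists_atom_not_below:
  assumes "x \<in> L" "y \<in> L" "le x y" "x \<noteq> y"
  obtains a where "a \<in> atoms_of L le" "le a y" "\<not> le a x"
proof -
  have "\<not> le y x"
    using assms po_antisym by blast
  then show ?thesis
    using that is_lub_atoms_below[OF assms(2)] assms(1) unfolding is_lub_def by blast
qed

lemma rank_join_atom:
  assumes "a \<in> atoms_of L le" "x \<in> L" "\<not> le a x"
  shows "\<rho> (join_on L le x a) = \<rho> x + 1"
proof -
  have aL: "a \<in> L"
    using assms(1) atoms_subset by blast
  have "\<rho> (meet_on L le x a) = 0"
    using glb_atom_not_below_is_bot[OF assms(1,3) is_glb_meet_on[OF assms(2) aL]] rank_bot by blast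
  then have "\<rho> (join_on L le x a) \<le> \<rho> x + 1"
    using rank_submodular[OF assms(2) aL] rank_atom[OF assms(1)] by simp
  moreover have "\<rho> x < \<rho> (join_on L le x a)"
  proof (rule rank_less[OF assms(2)])
    show "join_on L le x a \<in> L" "lt_on le x (join_on L le x a)"
      using is_lub_join_on[OF assms(2) aL] assms(3) unfolding is_lub_def lt_on_def by auto
  qed
  ultimately show ?thesis by simp
qed

definition atom_basis :: "'a set \<Rightarrow> 'a \<Rightarrow> bool" where
  "atom_basis A x \<longleftrightarrow> A \<subseteq> atoms_of L le \<and> card A = \<rho> x \<and> is_lub L le A x"

lemma atom_basis_bot: "is_bot L le b \<Longrightarrow> atom_basis {} b"
  unfolding atom_basis_def using rank_bot is_lub_empty by simp

lemma atom_basis_in_carrier: "atom_basis A x \<Longrightarrow> x \<in> L"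
  unfolding atom_basis_def is_lub_def by blast

lemma atom_basis_insert:
  assumes "atom_basis A x" "a \<in> atoms_of L le" "\<not> le a x"
  shows "atom_basis (insert a A) (join_on L le x a)"
proof -
  have xL: "x \<in> L" and A: "A \<subseteq> atoms_of L le" "card A = \<rho> x" "is_lub L le A x"
    using assms(1) atom_basis_in_carrier unfolding atom_basis_def by auto
  have "a \<notin> A"
    using A(3) assms(3) unfolding is_lub_def by blast
  then have "card (insert a A) = \<rho> (join_on L le x a)"
    using A(1,2) finite_subset[OF _ finite_atoms] rank_join_atom[OF assms(2) xL assms(3)] by simp
  moreover have "is_lub L le (insert a A) (join_on L le x a)"
    using is_lub_insert A(1,3) atoms_subset is_lub_join_on[OF xL] assms(2) by blast
  ultimately show ?thesis
    using A(1) assms(2) unfolding atom_basis_def by blast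
qed

lemma atom_basis_extend:
  assumes "atom_basis A x" "y \<in> L" "le x y"
  obtains B where "A \<subseteq> B" "atom_basis B y"
  using assms
proof (induction "\<rho> y - \<rho> x" arbitrary: A x rule: less_induct)
  case less
  have xL: "x \<in> L"
    using less.prems(2) atom_basis_in_carrier by blast
  show ?case
  proof (cases "x = y")
    case True
    then show ?thesis using less.prems by blast
  next
    case False
    then obtain a where a: "a \<in> atoms_of L le" "le a y" "\<not> le a x"
      using exists_atom_not_below xL less.prems(3,4) by blast
    define z where "z = join_on L le x a"
    have z: "atom_basis (insert a A) z"
      unfolding z_def using atom_basis_insert[OF less.prems(2) a(1,3)] .
    have "is_lub L le {x, a} z"
      unfolding z_def using is_lub_join_on xL a(1) atoms_subset by blast
    then have "z \<in> L" "le z y"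
      using a(2) less.prems(3,4) unfolding is_lub_def by auto
    moreover have "\<rho> z = \<rho> x + 1"
      unfolding z_def using rank_join_atom[OF a(1) xL a(3)] .
    ultimately have "\<rho> y - \<rho> z < \<rho> y - \<rho> x"
      using rank_mono[of z y] less.prems(3) by simp
    then show ?thesis
    proof (rule less.hyps[OF _ _ z less.prems(3) \<open>le z y\<close>])
      fix B
      assume "insert a A \<subseteq> B" "atom_basis B y"
      then show thesis
        using less.prems(1) by blast
    qed
  qed
qed

definition nested_atom_bases :: "'a set \<Rightarrow> 'a set \<Rightarrow> ('a \<Rightarrow> 'a set) \<Rightarrow> bool" where
  "nested_atom_bases C A0 F \<longleftrightarrow>
     (\<forall>x\<in>C. A0 \<subseteq> F x \<and> atom_basis (F x) x) \<and> (\<forall>x\<in>C. \<forall>y\<in>C. le x y \<longrightarrow> F x \<subseteq> F y)"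

lemma nested_atom_bases_update_min:
  assumes "nested_atom_bases (C - {m}) B F" "A0 \<subseteq> B" "atom_basis B m"
    and "C \<subseteq> L" "m \<in> C" "\<forall>x\<in>C. le m x"
  shows "nested_atom_bases C A0 (F(m := B))"
proof -
  have "A0 \<subseteq> (F(m := B)) x \<and> atom_basis ((F(m := B)) x) x" if "x \<in> C" for x
  proof (cases "x = m")
    case False
    then have "B \<subseteq> F x" "atom_basis (F x) x"
      using assms(1) that unfolding nested_atom_bases_def by auto
    with assms(2) False show ?thesis by auto
  qed (use assms(2,3) in simp)
  moreover have "(F(m := B)) x \<subseteq> (F(m := B)) y" if "x \<in> C" "y \<in> C" "le x y" for x y
  proof -
    have "x = m" if "y = m"
      using that \<open>x \<in> C\<close> \<open>le x y\<close> assms(4-6) po_antisym by blast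
    then show ?thesis
      using that assms(1) unfolding nested_atom_bases_def by (cases "x = m") auto
  qed
  ultimately show ?thesis
    unfolding nested_atom_bases_def by blast
qed

lemma exists_nested_atom_bases:
  assumes "atom_basis A0 x0" "C \<subseteq> L" "chain_on le C" "\<forall>x\<in>C. le x0 x"
  shows "\<exists>F. nested_atom_bases C A0 F"
proof -
  have "finite C"
    using assms(2) finite_carrier finite_subset by blast
  then show ?thesis
    using assms
  proof (induction C arbitrary: A0 x0 rule: finite_remove_induct)
    case empty
    then show ?case by (simp add: nested_atom_bases_def)
  next
    case (remove C)
    obtain m where m: "m \<in> C" "\<forall>x\<in>C. le m x"
      using chain_has_min remove.hyps(1,2) remove.prems(2,3) by blast
    obtain B where B: "A0 \<subseteq> B" "atom_basis B m"
      using atom_basis_extend[OF remove.prems(1)] m(1) remove.prems(2,4) by blast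
    have "C - {m} \<subseteq> L" "chain_on le (C - {m})" "\<forall>x\<in>C - {m}. le m x"
      using remove.prems(2,3) m(2) unfolding chain_on_def by auto
    then obtain F where "nested_atom_bases (C - {m}) B F"
      using remove.IH[OF m(1) B(2)] by blast
    then show ?case
      using nested_atom_bases_update_min[OF _ B _ m] remove.prems(2) by blast
  qed
qed

definition chain_of_labels :: "('a \<Rightarrow> nat) \<Rightarrow> nat set option set \<Rightarrow> 'a set" where
  "chain_of_labels \<phi> D = {x \<in> L. \<exists>A. A \<subseteq> atoms_of L le \<and> Some (\<phi> ` A) \<in> D \<and> is_lub L le A x}"

lemma chain_of_labels_image:
  assumes "inj_on \<phi> (atoms_of L le)" "C \<subseteq> L" "\<forall>x\<in>C. atom_basis (F x) x"
  shows "chain_of_labels \<phi> ((\<lambda>x. Some (\<phi> ` F x)) ` C) = C"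
proof
  show "chain_of_labels \<phi> ((\<lambda>x. Some (\<phi> ` F x)) ` C) \<subseteq> C"
  proof
    fix x
    assume "x \<in> chain_of_labels \<phi> ((\<lambda>x. Some (\<phi> ` F x)) ` C)"
    then obtain A y where A: "A \<subseteq> atoms_of L le" "is_lub L le A x"
      and y: "y \<in> C" "\<phi> ` A = \<phi> ` F y"
      unfolding chain_of_labels_def by blast
    have "A = F y"
      using inj_on_image_eq_iff[OF assms(1) A(1)] y assms(3) unfolding atom_basis_def by blast
    then have "x = y"
      using A(2) assms(3) y(1) is_lub_unique unfolding atom_basis_def by blast
    with y(1) show "x \<in> C" by simp
  qed
  show "C \<subseteq> chain_of_labels \<phi> ((\<lambda>x. Some (\<phi> ` F x)) ` C)"
    using assms(2,3) unfolding chain_of_labels_def atom_basis_def by blast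
qed

lemma chain_labelling:
  assumes \<phi>: "inj_on \<phi> (atoms_of L le)" "\<phi> ` atoms_of L le \<subseteq> {1..n}"
    and C: "C \<subseteq> L" "chain_on le C" "\<rho> ` C \<subseteq> {..r}"
  obtains D where "D \<subseteq> trunc_bool_carrier r n" "chain_on trunc_bool_le D"
    and "trunc_bool_rank r ` D = \<rho> ` C" "chain_of_labels \<phi> D = C"
proof -
  obtain b where b: "is_bot L le b"
    using graded unfolding graded_rank_def by blast
  then have "\<forall>x\<in>C. le b x"
    using C(1) unfolding is_bot_def by blast
  then obtain F where "nested_atom_bases C {} F"
    using exists_nested_atom_bases[OF atom_basis_bot[OF b] C(1,2)] by blast
  then have F: "\<forall>x\<in>C. atom_basis (F x) x" "\<forall>x\<in>C. \<forall>y\<in>C. le x y \<longrightarrow> F x \<subseteq> F y"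
    unfolding nested_atom_bases_def by blast+
  define D where "D = (\<lambda>x. Some (\<phi> ` F x)) ` C"
  have card: "card (\<phi> ` F x) = \<rho> x" if "x \<in> C" for x
    using F(1) that card_image[OF inj_on_subset[OF \<phi>(1)]] unfolding atom_basis_def by auto
  have "D \<subseteq> trunc_bool_carrier r n"
  proof
    fix d
    assume "d \<in> D"
    then obtain x where x: "x \<in> C" "d = Some (\<phi> ` F x)"
      unfolding D_def by blast
    have "\<phi> ` F x \<subseteq> {1..n}"
      using F(1) x(1) \<phi>(2) unfolding atom_basis_def by blast
    moreover have "card (\<phi> ` F x) \<le> r"
      using card[OF x(1)] C(3) x(1) by auto
    ultimately show "d \<in> trunc_bool_carrier r n"
      unfolding trunc_bool_carrier_def x(2) by blast
  qed
  moreover have "chain_on trunc_bool_le D"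
    unfolding D_def using C(2)
  proof (rule chain_on_image)
    show "trunc_bool_le (Some (\<phi> ` F x)) (Some (\<phi> ` F y))" if "x \<in> C" "y \<in> C" "le x y" for x y
      using F(2) that by (simp add: image_mono)
  qed
  moreover have "trunc_bool_rank r ` D = \<rho> ` C"
  proof -
    have "trunc_bool_rank r ` D = (\<lambda>x. card (\<phi> ` F x)) ` C"
      unfolding D_def image_image by simp
    also have "\<dots> = \<rho> ` C"
      using card by (rule image_cong[OF HOL.refl])
    finally show ?thesis .
  qed
  moreover have "chain_of_labels \<phi> D = C"
    unfolding D_def using chain_of_labels_image[OF \<phi>(1) C(1) F(1)] .
  ultimately show ?thesis
    using that by blast
qed

theorem flag_f_le_trunc_bool:
  assumes "S \<subseteq> {..r}"
  shows "flag_f L le \<rho> S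
    \<le> flag_f (trunc_bool_carrier r (card (atoms_of L le))) trunc_bool_le (trunc_bool_rank r) S"
proof -
  let ?n = "card (atoms_of L le)"
  have "card (atoms_of L le) = card {1..?n}"
    by simp
  then obtain \<phi> where \<phi>: "bij_betw \<phi> (atoms_of L le) {1..?n}"
    using finite_same_card_bij[OF finite_atoms finite_atLeastAtMost] by blast
  then have \<phi>_inj: "inj_on \<phi> (atoms_of L le)" and \<phi>_into: "\<phi> ` atoms_of L le \<subseteq> {1..?n}"
    by (simp_all add: bij_betw_def)
  let ?B = "{D. D \<subseteq> trunc_bool_carrier r ?n \<and> chain_on trunc_bool_le D \<and> trunc_bool_rank r ` D = S}"
  have "{C. C \<subseteq> L \<and> chain_on le C \<and> \<rho> ` C = S} \<subseteq> chain_of_labels \<phi> ` ?B"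
  proof
    fix C
    assume "C \<in> {C. C \<subseteq> L \<and> chain_on le C \<and> \<rho> ` C = S}"
    then have C: "C \<subseteq> L" "chain_on le C" "\<rho> ` C = S"
      by blast+
    then have "\<rho> ` C \<subseteq> {..r}"
      using assms by simp
    then obtain D where D: "D \<subseteq> trunc_bool_carrier r ?n" "chain_on trunc_bool_le D"
      "trunc_bool_rank r ` D = \<rho> ` C" "chain_of_labels \<phi> D = C"
      using chain_labelling[OF \<phi>_inj \<phi>_into C(1,2)] by blast
    then have "D \<in> ?B"
      using C(3) by simp
    then show "C \<in> chain_of_labels \<phi> ` ?B"
      using D(4) by (rule rev_image_eqI[OF _ sym])
  qed
  moreover have "finite ?B"
    by (rule finite_subset[of _ "Pow (trunc_bool_carrier r ?n)"]) (auto simp: finite_trunc_bool_carrier)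
  ultimately show ?thesis
    unfolding flag_f_def by (rule surj_card_le[rotated])
qed

end

theorem corollary3p3:
  fixes L :: "'a set" and le :: "'a \<Rightarrow> 'a \<Rightarrow> bool" and \<rho> :: "'a \<Rightarrow> nat"
    and r n :: nat and S :: "nat set"
  assumes "geometric_lattice L le \<rho>"
    and "\<exists>t. is_top L le t \<and> \<rho> t = r + 1"
    and "card (atoms_of L le) = n"
    and "S \<subseteq> {1..r}"
  shows "flag_f L le \<rho> S
           \<le> flag_f (trunc_bool_carrier r n) trunc_bool_le (trunc_bool_rank r) S"
proof -
  interpret geom_lattice L le \<rho>
    using assms(1) by (rule geom_lattice.intro)
  have "S \<subseteq> {..r}"
    using assms(4) by auto
  from flag_f_le_trunc_bool[OF this] show ?thesis
    unfolding assms(3) .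
qed

end
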